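(* Let $Q=(I,\Omega)$ be a quiver, $\alpha\in\mathbb{N}^I$, and let $F^*:0=F^0\subset F^1\subset\cdots\subset F^s=\bigoplus_{i\in I}\mathbb{C}^{\alpha_i}$ be a flag of $I$-graded subspaces. For $\underline{n}\in\mathbb{N}_{\geq 1}^{\Omega}$ and $r\geq 0$ let $S_r^{\underline{n}}\subseteq \mathrm{End}(\alpha)_{F^*}$ and $s_r^{\underline{n}}=\dim S_r^{\underline{n}}$ be as defined in the context. Then there exists $\underline{n_0}\in\mathbb{Z}^{\Omega}$ such that for all $\underline{n}\geq\underline{n_0}$ (componentwise), $$s_0^{\underline{n}}=\max_{r\geq 0}\bigl(s_r^{\underline{n}}-r\bigr).$$
   Context: Write $V_i=\mathbb{C}^{\alpha_i}$ and $F^k_i=F^k\cap V_i$. For $\underline{n}\in\mathbb{N}_{\geq1}^{\Omega}$, $Q_{\underline{n}}$ is the quiver with vertex set $I$ obtained from $Q$ by replacing each arrow $h:i\to j$ by $n_h$ identical arrows $i\to j$. A linear map $f:V_i\to V_j$ is compatible with $F^*$ if $f(F^k_i)\subseteq F^k_j$ for all $k$; $\mathrm{Hom}(V_i,V_j)_{F^*}$ denotes the space of such maps. $\mathrm{Rep}(Q_{\underline{n}},\alpha)_{F^*}$ is the vector space of representations $x=(x_a)$ of $Q_{\underline{n}}$ on $(V_i)_{i\in I}$ with every $x_a$ (for $a:i\to j$) in $\mathrm{Hom}(V_i,V_j)_{F^*}$. $\mathrm{End}(\alpha)_{F^*}$ is the space of tuples $g=(g_i)_{i\in I}$, $g_i\in\mathrm{End}(V_i)$,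 with $g_i(F^k_i)\subseteq F^k_i$ for all $i,k$. For $g\in\mathrm{End}(\alpha)_{F^*}$ let $W_{\underline{n}}(g)=\{x\in \mathrm{Rep}(Q_{\underline{n}},\alpha)_{F^*}: g_jx_a=x_ag_i \text{ for every arrow } a:i\to j\}$ (a linear subspace). Define $S_r^{\underline{n}}=\{g\in\mathrm{End}(\alpha)_{F^*}:\dim W_{\underline{n}}(g)\geq \dim \mathrm{Rep}(Q_{\underline{n}},\alpha)_{F^*}-r\}$ and $s_r^{\underline{n}}=\dim S_r^{\underline{n}}$. For $\underline{m},\underline{n}\in\mathbb{Z}^\Omega$, $\underline{n}\geq\underline{m}$ means $n_h\geq m_h$ for all $h\in\Omega$. *)

theory Defs
  imports "HOL-Analysis.Analysis" "HOL-Library.Function_Algebras"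
begin

(* Vectors of V_i = C^(alpha_i): functions nat => complex vanishing from index alpha_i on. *)
definition vecsp :: "nat \<Rightarrow> (nat \<Rightarrow> complex) set" where
  "vecsp d = {v. \<forall>a\<ge>d. v a = 0}"

definition csubspace_fun :: "(nat \<Rightarrow> complex) set \<Rightarrow> bool" where
  "csubspace_fun S \<longleftrightarrow> 0 \<in> S \<and> (\<forall>u\<in>S. \<forall>v\<in>S. u + v \<in> S)
     \<and> (\<forall>c::complex. \<forall>v\<in>S. (\<lambda>a. c * v a) \<in> S)"

(* A flag 0 = F^0 \<subseteq> F^1 \<subseteq> ... \<subseteq> F^s = \<oplus>_i V_i of I-graded subspaces,
   given by its graded pieces F k i = F^k \<inter> V_i. *)
definition graded_flag ::
  "'v set \<Rightarrow> ('v \<Rightarrow> nat) \<Rightarrow> nat \<Rightarrow> (nat \<Rightarrow> 'v \<Rightarrow> (nat \<Rightarrow> complex) set) \<Rightarrow> bool" where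
  "graded_flag I \<alpha> s F \<longleftrightarrow>
     (\<forall>k\<le>s. \<forall>i\<in>I. csubspace_fun (F k i) \<and> F k i \<subseteq> vecsp (\<alpha> i))
   \<and> (\<forall>i\<in>I. F 0 i = {0} \<and> F s i = vecsp (\<alpha> i))
   \<and> (\<forall>k<s. \<forall>i\<in>I. F k i \<subseteq> F (Suc k) i)"

definition mat_app :: "nat \<Rightarrow> (nat \<Rightarrow> nat \<Rightarrow> complex) \<Rightarrow> (nat \<Rightarrow> complex) \<Rightarrow> (nat \<Rightarrow> complex)" where
  "mat_app d M v = (\<lambda>a. \<Sum>b<d. M a b * v b)"

definition compat ::
  "('v \<Rightarrow> nat) \<Rightarrow> nat \<Rightarrow> (nat \<Rightarrow> 'v \<Rightarrow> (nat \<Rightarrow> complex) set) \<Rightarrow> 'v \<Rightarrow> 'v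
     \<Rightarrow> (nat \<Rightarrow> nat \<Rightarrow> complex) \<Rightarrow> bool" where
  "compat \<alpha> s F i j M \<longleftrightarrow> (\<forall>k\<le>s. \<forall>v\<in>F k i. mat_app (\<alpha> i) M v \<in> F k j)"

(* Rep(Q_n, alpha)_{F^*}: x (h,c,a,b) is the (a,b) entry of the c-th copy (c < n h) of arrow h *)
definition RepF ::
  "'e set \<Rightarrow> ('e \<Rightarrow> 'v) \<Rightarrow> ('e \<Rightarrow> 'v) \<Rightarrow> ('v \<Rightarrow> nat) \<Rightarrow> nat
     \<Rightarrow> (nat \<Rightarrow> 'v \<Rightarrow> (nat \<Rightarrow> complex) set) \<Rightarrow> ('e \<Rightarrow> nat)
     \<Rightarrow> ('e \<times> nat \<times> nat \<times> nat \<Rightarrow> complex) set" where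
  "RepF \<Omega> src tgt \<alpha> s F n =
     {x. (\<forall>h c a b. x (h, c, a, b) \<noteq> 0 \<longrightarrow>
             h \<in> \<Omega> \<and> c < n h \<and> a < \<alpha> (tgt h) \<and> b < \<alpha> (src h))
       \<and> (\<forall>h\<in>\<Omega>. \<forall>c<n h. compat \<alpha> s F (src h) (tgt h) (\<lambda>a b. x (h, c, a, b)))}"

definition EndCoords :: "'v set \<Rightarrow> ('v \<Rightarrow> nat) \<Rightarrow> ('v \<times> nat \<times> nat) set" where
  "EndCoords I \<alpha> = {(i, a, b). i \<in> I \<and> a < \<alpha> i \<and> b < \<alpha> i}"

(* End(alpha)_{F^*}: g (i,a,b) is the (a,b) entry of g_i *)
definition EndF ::
  "'v set \<Rightarrow> ('v \<Rightarrow> nat) \<Rightarrow> nat \<Rightarrow> (nat \<Rightarrow> 'v \<Rightarrow> (nat \<Rightarrow> complex) set)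
     \<Rightarrow> ('v \<times> nat \<times> nat \<Rightarrow> complex) set" where
  "EndF I \<alpha> s F =
     {g. (\<forall>p. g p \<noteq> 0 \<longrightarrow> p \<in> EndCoords I \<alpha>)
       \<and> (\<forall>i\<in>I. compat \<alpha> s F i i (\<lambda>a b. g (i, a, b)))}"

definition Wn ::
  "'e set \<Rightarrow> ('e \<Rightarrow> 'v) \<Rightarrow> ('e \<Rightarrow> 'v) \<Rightarrow> ('v \<Rightarrow> nat) \<Rightarrow> nat
     \<Rightarrow> (nat \<Rightarrow> 'v \<Rightarrow> (nat \<Rightarrow> complex) set) \<Rightarrow> ('e \<Rightarrow> nat)
     \<Rightarrow> ('v \<times> nat \<times> nat \<Rightarrow> complex) \<Rightarrow> ('e \<times> nat \<times> nat \<times> nat \<Rightarrow> complex) set" where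
  "Wn \<Omega> src tgt \<alpha> s F n g =
     {x \<in> RepF \<Omega> src tgt \<alpha> s F n.
        \<forall>h\<in>\<Omega>. \<forall>c<n h. \<forall>a b.
          (\<Sum>t<\<alpha> (tgt h). g (tgt h, a, t) * x (h, c, t, b))
            = (\<Sum>t<\<alpha> (src h). x (h, c, a, t) * g (src h, t, b))}"

definition cdim :: "('a \<Rightarrow> complex) set \<Rightarrow> nat" where
  "cdim W = vector_space.dim (\<lambda>(c::complex) (x::'a \<Rightarrow> complex). (\<lambda>p. c * x p)) W"

(* Dimension of an algebraic subset X of the affine space C^K (K a finite coordinate set):
   the largest |J|, J \<subseteq> K, such that the coordinate projection of X to C^J contains a
   nonempty (Euclidean) open subset of C^J.  C^J is identified with the functions vanishing
   off J, carrying the subspace topology of the product topology. *)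
definition proj_has_interior :: "'a set \<Rightarrow> ('a \<Rightarrow> complex) set \<Rightarrow> bool" where
  "proj_has_interior J X \<longleftrightarrow>
     (\<exists>U. open U \<and> (\<exists>f\<in>U. \<forall>p. p \<notin> J \<longrightarrow> f p = 0)
        \<and> (\<forall>f\<in>U. (\<forall>p. p \<notin> J \<longrightarrow> f p = 0) \<longrightarrow> (\<exists>y\<in>X. \<forall>p\<in>J. y p = f p)))"

definition alg_dim :: "'a set \<Rightarrow> ('a \<Rightarrow> complex) set \<Rightarrow> nat" where
  "alg_dim K X = Max {card J | J. J \<subseteq> K \<and> proj_has_interior J X}"

definition Sr ::
  "'v set \<Rightarrow> 'e set \<Rightarrow> ('e \<Rightarrow> 'v) \<Rightarrow> ('e \<Rightarrow> 'v) \<Rightarrow> ('v \<Rightarrow> nat) \<Rightarrow> nat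
     \<Rightarrow> (nat \<Rightarrow> 'v \<Rightarrow> (nat \<Rightarrow> complex) set) \<Rightarrow> ('e \<Rightarrow> nat) \<Rightarrow> nat
     \<Rightarrow> ('v \<times> nat \<times> nat \<Rightarrow> complex) set" where
  "Sr I \<Omega> src tgt \<alpha> s F n r =
     {g \<in> EndF I \<alpha> s F.
        int (cdim (Wn \<Omega> src tgt \<alpha> s F n g)) \<ge> int (cdim (RepF \<Omega> src tgt \<alpha> s F n)) - int r}"

definition sr ::
  "'v set \<Rightarrow> 'e set \<Rightarrow> ('e \<Rightarrow> 'v) \<Rightarrow> ('e \<Rightarrow> 'v) \<Rightarrow> ('v \<Rightarrow> nat) \<Rightarrow> nat
     \<Rightarrow> (nat \<Rightarrow> 'v \<Rightarrow> (nat \<Rightarrow> complex) set) \<Rightarrow> ('e \<Rightarrow> nat) \<Rightarrow> nat \<Rightarrow> nat" where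
  "sr I \<Omega> src tgt \<alpha> s F n r = alg_dim (EndCoords I \<alpha>) (Sr I \<Omega> src tgt \<alpha> s F n r)"

end

(* Let D = dim End(alpha) and suppose every arrow has multiplicity at least D. If g fails to
   commute with some copy c0 of an arrow h on some x in Rep, then moving that block of x into
   each of the n_h copies of h gives n_h vectors of Rep, each violating only the commutation
   condition of its own copy; hence codim W_n(g) >= n_h >= D. So S_r = S_0 for r < D, while
   for r >= D one has s_r - r <= D - r <= 0 <= s_0. *)

theory Submission
  imports Defs
begin

abbreviation cscale :: "complex \<Rightarrow> ('a \<Rightarrow> complex) \<Rightarrow> 'a \<Rightarrow> complex" where
  "cscale \<equiv> \<lambda>c x p. c * x p"

interpretation cfun: vector_space "cscale :: complex \<Rightarrow> ('a \<Rightarrow> complex) \<Rightarrow> _"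
  by unfold_locales (auto simp: fun_eq_iff algebra_simps)

lemma sum_apply: "sum f A x = (\<Sum>a\<in>A. f a x)"
  by (induction A rule: infinite_finite_induct) auto

lemma span_indicators:
  assumes "finite P" and "\<And>p. z p \<noteq> 0 \<Longrightarrow> p \<in> P"
  shows "z \<in> cfun.span ((\<lambda>q. indicator {q}) ` P)"
proof -
  have "z = (\<Sum>q\<in>P. cscale (z q) (indicator {q}))"
    using assms
    by (auto simp: fun_eq_iff sum_apply indicator_def if_distrib Int_insert_right cong: if_cong)
  also have "\<dots> \<in> cfun.span ((\<lambda>q. indicator {q}) ` P)"
    by (intro cfun.span_sum cfun.span_scale cfun.span_base) auto
  finally show ?thesis .
qed

context vector_space
begin

lemma dim_add_card_le_of_separating_family:
  assumes "finite T" and "R \<subseteq> span T" and "W \<subseteq> R"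
    and subspace_Q: "\<And>m. m < N \<Longrightarrow> subspace (Q m)"
    and W_Q: "\<And>m. m < N \<Longrightarrow> W \<subseteq> Q m"
    and Y_R: "\<And>c. c < N \<Longrightarrow> Y c \<in> R"
    and Y_Q: "\<And>c m. c < N \<Longrightarrow> m < N \<Longrightarrow> c \<noteq> m \<Longrightarrow> Y c \<in> Q m"
    and Y_not_Q: "\<And>m. m < N \<Longrightarrow> Y m \<notin> Q m"
  shows "dim W + N \<le> dim R"
proof -
  obtain B where B: "B \<subseteq> W" "independent B" "card B = dim W"
    by (rule basis_exists)
  obtain C where C: "C \<subseteq> R" "independent C" "R \<subseteq> span C" "card C = dim R"
    by (rule basis_exists)
  have "finite C"
    using independent_span_bound[OF \<open>finite T\<close> C(2)] C(1) assms(2) by auto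
  have "finite B"
    using independent_span_bound[OF \<open>finite T\<close> B(2)] B(1) assms(2,3) by auto
  have extend: "independent (B \<union> Y ` {..<m}) \<and> card (B \<union> Y ` {..<m}) = card B + m"
    if "m \<le> N" for m
    using that
  proof (induction m)
    case 0
    then show ?case using B by simp
  next
    case (Suc m)
    define S where "S = B \<union> Y ` {..<m}"
    have "m < N" using Suc by simp
    have "S \<subseteq> Q m"
      unfolding S_def using B(1) W_Q Y_Q \<open>m < N\<close> by auto
    then have "span S \<subseteq> Q m"
      using span_minimal subspace_Q \<open>m < N\<close> by blast
    then have "Y m \<notin> span S"
      using Y_not_Q \<open>m < N\<close> by blast
    moreover have "B \<union> Y ` {..<Suc m} = insert (Y m) S"
      unfolding S_def lessThan_Suc by auto
    moreover have "finite S" and "independent S" and "card S = card B + m"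
      using Suc \<open>finite B\<close> by (simp_all add: S_def)
    ultimately show ?case
      using independent_insertI span_base by (metis card_insert_disjoint add_Suc_right)
  qed
  have "B \<union> Y ` {..<N} \<subseteq> span C"
    using B(1) C(3) Y_R assms(3) by auto
  then show ?thesis
    using independent_span_bound[OF \<open>finite C\<close>] extend[OF order_refl] B(3) C(4) by metis
qed

end

lemma alg_dim_le_card:
  assumes "finite K" and "X \<noteq> {}"
  shows "alg_dim K X \<le> card K"
proof -
  let ?cards = "{card J | J. J \<subseteq> K \<and> proj_has_interior J X}"
  have "?cards \<subseteq> card ` Pow K"
    by auto
  then have "finite ?cards"
    using \<open>finite K\<close> by (meson finite_Pow_iff finite_imageI finite_subset)
  moreover have "proj_has_interior {} X"
    unfolding proj_has_interior_def using \<open>X \<noteq> {}\<close> by (intro exI[of _ UNIV]) auto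
  then have "?cards \<noteq> {}"
    by blast
  ultimately show ?thesis
    unfolding alg_dim_def using \<open>finite K\<close> by (auto simp: Max_le_iff intro: card_mono)
qed

lemma finite_EndCoords:
  assumes "finite I"
  shows "finite (EndCoords I \<alpha>)"
proof -
  have "EndCoords I \<alpha> = Sigma I (\<lambda>i. {..<\<alpha> i} \<times> {..<\<alpha> i})"
    unfolding EndCoords_def by auto
  then show ?thesis
    using assms by simp
qed

lemma compat_zero:
  assumes "graded_flag I \<alpha> s F" and "j \<in> I"
  shows "compat \<alpha> s F i j (\<lambda>a b. 0)"
  using assms unfolding compat_def graded_flag_def csubspace_fun_def mat_app_def
  by (auto simp: zero_fun_def[symmetric])

lemma zero_mem_Sr:
  assumes "graded_flag I \<alpha> s F"
  shows "0 \<in> Sr I \<Omega> src tgt \<alpha> s F n r"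
proof -
  have "0 \<in> EndF I \<alpha> s F"
    unfolding EndF_def using compat_zero[OF assms] by auto
  moreover have "Wn \<Omega> src tgt \<alpha> s F n 0 = RepF \<Omega> src tgt \<alpha> s F n"
    unfolding Wn_def by auto
  ultimately show ?thesis
    unfolding Sr_def by auto
qed

lemma sr_le_card_EndCoords:
  assumes "finite I" and "graded_flag I \<alpha> s F"
  shows "sr I \<Omega> src tgt \<alpha> s F n r \<le> card (EndCoords I \<alpha>)"
proof -
  have "Sr I \<Omega> src tgt \<alpha> s F n r \<noteq> {}"
    using zero_mem_Sr[OF assms(2)] by blast
  then show ?thesis
    unfolding sr_def by (rule alg_dim_le_card[OF finite_EndCoords[OF assms(1)]])
qed

definition intertwines ::
  "('v \<Rightarrow> nat) \<Rightarrow> ('e \<Rightarrow> 'v) \<Rightarrow> ('e \<Rightarrow> 'v) \<Rightarrow> ('v \<times> nat \<times> nat \<Rightarrow> complex)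
     \<Rightarrow> 'e \<Rightarrow> nat \<Rightarrow> ('e \<times> nat \<times> nat \<times> nat \<Rightarrow> complex) \<Rightarrow> bool" where
  "intertwines \<alpha> src tgt g h c x \<longleftrightarrow>
     (\<forall>a b. (\<Sum>t<\<alpha> (tgt h). g (tgt h, a, t) * x (h, c, t, b))
             = (\<Sum>t<\<alpha> (src h). x (h, c, a, t) * g (src h, t, b)))"

lemma Wn_eq:
  "Wn \<Omega> src tgt \<alpha> s F n g =
     {x \<in> RepF \<Omega> src tgt \<alpha> s F n. \<forall>h\<in>\<Omega>. \<forall>c<n h. intertwines \<alpha> src tgt g h c x}"
  unfolding Wn_def intertwines_def by simp

lemma subspace_intertwines: "cfun.subspace {x. intertwines \<alpha> src tgt g h c x}"
proof -
  have scale: "(\<Sum>t\<in>A. u t * (k * v t)) = k * (\<Sum>t\<in>A. u t * v t)"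
    "(\<Sum>t\<in>A. k * v t * u t) = k * (\<Sum>t\<in>A. v t * u t)"
    for A and k :: complex and u v :: "nat \<Rightarrow> complex"
    by (simp_all add: sum_distrib_left mult_ac)
  show ?thesis
    unfolding cfun.subspace_def intertwines_def
    by (simp add: scale distrib_left distrib_right sum.distrib)
qed

definition move_copy ::
  "'e \<Rightarrow> nat \<Rightarrow> nat \<Rightarrow> ('e \<times> nat \<times> nat \<times> nat \<Rightarrow> complex)
     \<Rightarrow> 'e \<times> nat \<times> nat \<times> nat \<Rightarrow> complex" where
  "move_copy h c0 c x = (\<lambda>(h', c', a, b). if h' = h \<and> c' = c then x (h, c0, a, b) else 0)"

lemma move_copy_mem_RepF:
  assumes "graded_flag I \<alpha> s F" and "\<forall>h\<in>\<Omega>. tgt h \<in> I"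
    and "x \<in> RepF \<Omega> src tgt \<alpha> s F n" and "h \<in> \<Omega>" and "c0 < n h" and "c < n h"
  shows "move_copy h c0 c x \<in> RepF \<Omega> src tgt \<alpha> s F n"
proof -
  have "compat \<alpha> s F (src h') (tgt h') (\<lambda>a b. move_copy h c0 c x (h', c', a, b))"
    if "h' \<in> \<Omega>" for h' c'
  proof (cases "h' = h \<and> c' = c")
    case True
    then show ?thesis
      using assms(3-5) unfolding RepF_def move_copy_def by auto
  next
    case False
    then show ?thesis
      using compat_zero[OF assms(1)] assms(2) that unfolding move_copy_def by auto
  qed
  then show ?thesis
    using assms(3-6) unfolding RepF_def move_copy_def by auto
qed

lemma intertwines_move_copy:
  "intertwines \<alpha> src tgt g h m (move_copy h c0 c x) \<longleftrightarrow>
     m \<noteq> c \<or> intertwines \<alpha> src tgt g h c0 x"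
  by (cases "m = c") (simp_all add: intertwines_def move_copy_def)

lemma cdim_Wn_add_multiplicity_le:
  assumes "graded_flag I \<alpha> s F" and "finite \<Omega>" and "\<forall>h\<in>\<Omega>. tgt h \<in> I"
    and "Wn \<Omega> src tgt \<alpha> s F n g \<noteq> RepF \<Omega> src tgt \<alpha> s F n"
  shows "\<exists>h\<in>\<Omega>. cdim (Wn \<Omega> src tgt \<alpha> s F n g) + n h \<le> cdim (RepF \<Omega> src tgt \<alpha> s F n)"
proof -
  let ?R = "RepF \<Omega> src tgt \<alpha> s F n" and ?W = "Wn \<Omega> src tgt \<alpha> s F n g"
  obtain x h c0 where x: "x \<in> ?R" and h: "h \<in> \<Omega>" "c0 < n h"
    and not_intertwines: "\<not> intertwines \<alpha> src tgt g h c0 x"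
    using assms(4) unfolding Wn_eq by blast
  define P where "P = Sigma \<Omega> (\<lambda>h. {..<n h} \<times> {..<\<alpha> (tgt h)} \<times> {..<\<alpha> (src h)})"
  have "finite P"
    using assms(2) by (simp add: P_def)
  have "finite ((\<lambda>q. indicator {q}) ` P)"
    using \<open>finite P\<close> by simp
  moreover have "?R \<subseteq> cfun.span ((\<lambda>q. indicator {q}) ` P)"
  proof
    fix z assume "z \<in> ?R"
    then have "z p \<noteq> 0 \<Longrightarrow> p \<in> P" for p
      unfolding RepF_def P_def by (cases p) auto
    then show "z \<in> cfun.span ((\<lambda>q. indicator {q}) ` P)"
      using span_indicators[OF \<open>finite P\<close>] by blast
  qed
  ultimately have "cdim ?W + n h \<le> cdim ?R"
    unfolding cdim_def
  proof (rule cfun.dim_add_card_le_of_separating_family[where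
        Q = "\<lambda>m. {y. intertwines \<alpha> src tgt g h m y}" and Y = "\<lambda>c. move_copy h c0 c x"])
    show "?W \<subseteq> ?R"
      unfolding Wn_eq by blast
    show "?W \<subseteq> {y. intertwines \<alpha> src tgt g h m y}" if "m < n h" for m
      using h(1) that unfolding Wn_eq by blast
    show "move_copy h c0 c x \<in> ?R" if "c < n h" for c
      using move_copy_mem_RepF[OF assms(1,3) x h] that .
  qed (auto simp: subspace_intertwines intertwines_move_copy not_intertwines)
  then show ?thesis
    using h(1) by blast
qed

lemma Sr_eq_Sr_0:
  assumes "graded_flag I \<alpha> s F" and "finite \<Omega>" and "\<forall>h\<in>\<Omega>. tgt h \<in> I"
    and "\<forall>h\<in>\<Omega>. r < n h"
  shows "Sr I \<Omega> src tgt \<alpha> s F n r = Sr I \<Omega> src tgt \<alpha> s F n 0"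
proof
  show "Sr I \<Omega> src tgt \<alpha> s F n 0 \<subseteq> Sr I \<Omega> src tgt \<alpha> s F n r"
    unfolding Sr_def by auto
  show "Sr I \<Omega> src tgt \<alpha> s F n r \<subseteq> Sr I \<Omega> src tgt \<alpha> s F n 0"
  proof
    fix g assume g: "g \<in> Sr I \<Omega> src tgt \<alpha> s F n r"
    have "Wn \<Omega> src tgt \<alpha> s F n g = RepF \<Omega> src tgt \<alpha> s F n"
    proof (rule ccontr)
      assume "Wn \<Omega> src tgt \<alpha> s F n g \<noteq> RepF \<Omega> src tgt \<alpha> s F n"
      then obtain h where "h \<in> \<Omega>"
        and "cdim (Wn \<Omega> src tgt \<alpha> s F n g) + n h \<le> cdim (RepF \<Omega> src tgt \<alpha> s F n)"
        using cdim_Wn_add_multiplicity_le[OF assms(1-3)] by blast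
      moreover have "int (cdim (Wn \<Omega> src tgt \<alpha> s F n g))
          \<ge> int (cdim (RepF \<Omega> src tgt \<alpha> s F n)) - int r"
        using g unfolding Sr_def by blast
      moreover have "r < n h"
        using assms(4) \<open>h \<in> \<Omega>\<close> by blast
      ultimately show False
        by linarith
    qed
    then show "g \<in> Sr I \<Omega> src tgt \<alpha> s F n 0"
      using g unfolding Sr_def by simp
  qed
qed

theorem lemma4p3:
  fixes I :: "'v set" and \<Omega> :: "'e set" and src tgt :: "'e \<Rightarrow> 'v"
    and \<alpha> :: "'v \<Rightarrow> nat" and s :: nat
    and F :: "nat \<Rightarrow> 'v \<Rightarrow> (nat \<Rightarrow> complex) set"
  assumes "finite I" and "finite \<Omega>"
    and "\<forall>h\<in>\<Omega>. src h \<in> I \<and> tgt h \<in> I"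
    and "graded_flag I \<alpha> s F"
  shows "\<exists>n0 :: 'e \<Rightarrow> int. \<forall>n :: 'e \<Rightarrow> nat.
           (\<forall>h\<in>\<Omega>. 1 \<le> n h) \<and> (\<forall>h\<in>\<Omega>. n0 h \<le> int (n h)) \<longrightarrow>
           int (sr I \<Omega> src tgt \<alpha> s F n 0)
             = (SUP r::nat. int (sr I \<Omega> src tgt \<alpha> s F n r) - int r)"
proof -
  define D where "D = card (EndCoords I \<alpha>)"
  show ?thesis
  proof (intro exI[of _ "\<lambda>_. int D"] allI impI)
    fix n :: "'e \<Rightarrow> nat"
    assume "(\<forall>h\<in>\<Omega>. 1 \<le> n h) \<and> (\<forall>h\<in>\<Omega>. int D \<le> int (n h))"
    then have n_ge_D: "\<forall>h\<in>\<Omega>. D \<le> n h"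
      by auto
    let ?s = "sr I \<Omega> src tgt \<alpha> s F n"
    have "int (?s r) - int r \<le> int (?s 0)" for r
    proof (cases "r < D")
      case True
      then have "Sr I \<Omega> src tgt \<alpha> s F n r = Sr I \<Omega> src tgt \<alpha> s F n 0"
        using assms(3) n_ge_D by (intro Sr_eq_Sr_0[OF assms(4,2)]) auto
      then show ?thesis
        by (simp add: sr_def)
    next
      case False
      moreover have "?s r \<le> D"
        unfolding D_def by (rule sr_le_card_EndCoords[OF assms(1,4)])
      ultimately show ?thesis
        by linarith
    qed
    moreover have "int (?s 0) \<in> range (\<lambda>r. int (?s r) - int r)"
      by (rule image_eqI[where x = 0]) simp_all
    ultimately show "int (?s 0) = (SUP r. int (?s r) - int r)"
      by (intro cSup_eq_maximum[symmetric]) auto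
  qed
qed

end
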